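(* Let $N\geq 0$ be an integer. Then for all real $t$, \[ \tanh t=\sum_{j=1}^{N}\frac{2^{2j}(2^{2j}-1)B_{2j}}{(2j)!}\,t^{2j-1}+\tau_N(t),\qquad \tau_N(t)=(-1)^N\frac{2^{2N+3}t^{2N+1}}{\pi^{2N}}\sum_{k=1}^{\infty}\frac{1}{(2k-1)^{2N}\bigl(\pi^2(2k-1)^2+4t^2\bigr)}. \] Moreover, for every real $t\neq 0$, \[ \tanh t=\sum_{j=1}^{N}\frac{2^{2j}(2^{2j}-1)B_{2j}}{(2j)!}\,t^{2j-1}+\xi(t,N)\,\frac{2^{2N+2}(2^{2N+2}-1)B_{2N+2}}{(2N+2)!}\,t^{2N+1} \] for some number $\xi(t,N)$ with $0<\xi(t,N)<1$.
   Context: The Bernoulli numbers $B_n$ are defined by $\frac{t}{e^t-1}=\sum_{n=0}^\infty B_n\frac{t^n}{n!}$ for $|t|<2\pi$. An empty sum is understood to be zero. *)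

theory Defs
  imports "HOL-Analysis.Analysis"
begin

definition bern_gf :: "real \<Rightarrow> real" where
  "bern_gf t = (if t = 0 then 1 else t / (exp t - 1))"

definition bernoulli :: "nat \<Rightarrow> real" where
  "bernoulli = (THE B. \<forall>t. \<bar>t\<bar> < 2 * pi \<longrightarrow>
      (\<lambda>n. B n * t ^ n / fact n) sums bern_gf t)"

end

theory Submission
  imports Defs "HOL-Complex_Analysis.Complex_Analysis"
begin

text \<open>
  The reflection formula for the digamma function gives the partial fraction expansion
  \<open>tanh t = \<Sum>k. 8t / (\<pi>\<^sup>2 (2k+1)\<^sup>2 + 4t\<^sup>2)\<close>. Expanding each summand as a finite geometric
  series in \<open>-4t\<^sup>2 / (\<pi>\<^sup>2 (2k+1)\<^sup>2)\<close> with its exact remainder and summing over \<open>k\<close> yields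
  \<open>tanh t = \<Sum>j<N. c\<^sub>j t\<^bsup>2j+1\<^esup> + \<tau>\<^sub>N(t)\<close>, where \<open>c\<^sub>j\<close> is a multiple of the odd sum
  \<open>\<Sum>k. 1 / (2k-1)\<^bsup>2j+2\<^esup>\<close> and \<open>\<tau>\<^sub>N(t) = O(t\<^bsup>2N+1\<^esup>)\<close> uniformly in \<open>t\<close>.
  Since \<open>t/2 - t/2 tanh(t/2) = B(t) - B(2t)\<close> for \<open>B(t) = t/(e\<^sup>t-1)\<close>, comparing this
  expansion with the Taylor series of \<open>B(t) - B(2t)\<close> identifies \<open>c\<^sub>j\<close> with the Bernoulli
  coefficients. The bounds \<open>0 < \<xi> < 1\<close> hold because the series in \<open>\<tau>\<^sub>N(t)\<close> is positive
  and, for \<open>t \<noteq> 0\<close>, smaller than at \<open>t = 0\<close>.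
\<close>

section \<open>Power series coefficients\<close>

lemma powser_low_coeff_eq_0:
  fixes e :: "nat \<Rightarrow> 'a :: {real_normed_field,banach}" and R :: "'a \<Rightarrow> 'a"
  assumes r: "0 < r"
    and sums: "\<And>x. norm x < r \<Longrightarrow> (\<lambda>n. e n * x^n) sums (x^K * R x)"
    and bounded: "\<And>x. norm x < r \<Longrightarrow> norm (R x) \<le> C"
    and "m < K"
  shows "e m = 0"
  using \<open>m < K\<close>
proof (induction m rule: less_induct)
  case (less m)
  have "(\<lambda>n. e (n + m) * x^n) sums (x^(K - m) * R x)" if "x \<noteq> 0" "norm x < r" for x
  proof -
    have "(\<lambda>n. e (n + m) * x^(n + m)) sums (x^K * R x)"
      using sums[OF \<open>norm x < r\<close>] less by (subst sums_zero_iff_shift) auto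
    then have "(\<lambda>n. e (n + m) * x^(n + m) / x^m) sums (x^K * R x / x^m)"
      by (rule sums_divide)
    then show ?thesis
      using less.prems that by (simp add: power_add power_diff)
  qed
  then have "((\<lambda>x. x^(K - m) * R x) \<longlongrightarrow> e (0 + m)) (at 0)"
    by (intro powser_limit_0_strong[OF r])
  moreover have "((\<lambda>x. x^(K - m) * R x) \<longlongrightarrow> 0) (at 0)"
  proof (rule tendsto_0_le[where K = "max C 1"])
    show "((\<lambda>x::'a. x^(K - m)) \<longlongrightarrow> 0) (at 0)"
      using less.prems by (auto intro!: tendsto_eq_intros)
    have "eventually (\<lambda>x::'a. x \<in> ball 0 r) (at 0)"
      using r by (intro eventually_at_in_open') auto
    then show "eventually (\<lambda>x. norm (x^(K - m) * R x) \<le> norm (x^(K - m)) * max C 1) (at 0)"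
      by eventually_elim
         (auto simp: norm_mult intro!: mult_left_mono order.trans[OF bounded])
  qed
  ultimately show ?case
    using LIM_unique by fastforce
qed

lemma powser_coeffs_unique:
  fixes a b :: "nat \<Rightarrow> 'a :: {real_normed_field,banach}"
  assumes "0 < r"
    and "\<And>x. norm x < r \<Longrightarrow> (\<lambda>n. a n * x^n) sums f x"
    and "\<And>x. norm x < r \<Longrightarrow> (\<lambda>n. b n * x^n) sums f x"
  shows "a = b"
proof
  fix m
  have "(\<lambda>n. (a n - b n) * x^n) sums (x^Suc m * 0)" if "norm x < r" for x
    using sums_diff[OF assms(2,3)[OF that]] by (simp add: algebra_simps)
  then have "a m - b m = 0"
    using powser_low_coeff_eq_0[of r "\<lambda>n. a n - b n" "Suc m" "\<lambda>_. 0" 0 m] assms(1)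
    by simp
  then show "a m = b m"
    by simp
qed

lemma powser_coeff_eq_if_bounded_remainder:
  fixes d q :: "nat \<Rightarrow> 'a :: {real_normed_field,banach}" and R :: "'a \<Rightarrow> 'a"
  assumes "0 < r"
    and "\<And>x. norm x < r \<Longrightarrow> (\<lambda>n. d n * x^n) sums f x"
    and "\<And>x. norm x < r \<Longrightarrow> (\<lambda>n. q n * x^n) sums p x"
    and "\<And>x. norm x < r \<Longrightarrow> f x = p x + x^K * R x"
    and "\<And>x. norm x < r \<Longrightarrow> norm (R x) \<le> C"
    and "m < K"
  shows "d m = q m"
proof -
  have "(\<lambda>n. (d n - q n) * x^n) sums (x^K * R x)" if "norm x < r" for x
    using sums_diff[OF assms(2,3)[OF that]] assms(4)[OF that] by (simp add: algebra_simps)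
  then have "d m - q m = 0"
    by (rule powser_low_coeff_eq_0[OF \<open>0 < r\<close> _ assms(5) \<open>m < K\<close>])
  then show ?thesis
    by simp
qed

section \<open>Bernoulli numbers\<close>

lemma norm_ge_2pi_if_exp_eq_1:
  fixes z :: complex
  assumes "exp z = 1" "z \<noteq> 0"
  shows "2 * pi \<le> norm z"
proof -
  obtain k :: int where "Re z = 0" "Im z = 2 * pi * k"
    using assms(1) by (auto simp: exp_eq_1)
  moreover from this assms(2) have "k \<noteq> 0"
    by (auto simp: complex_eq_iff)
  ultimately show ?thesis
    by (simp add: cmod_eq_Im abs_mult)
qed

lemma holomorphic_exp_minus_1_over:
  "(\<lambda>z::complex. if z = 0 then 1 else (exp z - 1) / z) holomorphic_on UNIV"
proof -
  have "(\<lambda>z::complex. if z = 0 then deriv exp 0 else (exp z - exp 0) / (z - 0)) holomorphic_on UNIV"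
    by (rule pole_lemma) (auto intro: holomorphic_intros)
  moreover have "deriv exp (0::complex) = 1"
    using DERIV_imp_deriv[OF DERIV_exp, of "0::complex"] by simp
  ultimately show ?thesis
    by (simp cong: if_cong)
qed

lemma bern_gf_powser_exists:
  "\<exists>B. \<forall>t. \<bar>t\<bar> < 2 * pi \<longrightarrow> (\<lambda>n. B n * t ^ n / fact n) sums bern_gf t"
proof -
  define G where "G z = inverse (if z = 0 then 1 else (exp z - 1) / z)" for z :: complex
  have "(if z = 0 then 1 else (exp z - 1) / z) \<noteq> 0" if "norm z < 2 * pi" for z :: complex
  proof -
    have "exp z \<noteq> 1" if "z \<noteq> 0"
      using norm_ge_2pi_if_exp_eq_1[OF _ that] \<open>norm z < 2 * pi\<close> by linarith
    then show ?thesis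
      by simp
  qed
  then have "G holomorphic_on ball 0 (2 * pi)"
    unfolding G_def
    by (intro holomorphic_on_inverse holomorphic_on_subset[OF holomorphic_exp_minus_1_over]) auto
  then have series: "(\<lambda>n. (deriv ^^ n) G 0 / fact n * of_real t ^ n) sums G (of_real t)"
    if "\<bar>t\<bar> < 2 * pi" for t
    using holomorphic_power_series[of G 0 "2 * pi" "of_real t"] that by simp
  have G_of_real: "G (of_real t) = of_real (bern_gf t)" for t
    by (cases "t = 0") (simp_all add: G_def bern_gf_def exp_of_real)
  have Re_term: "Re (c / fact n * of_real t ^ n) = Re c * t ^ n / fact n" for c :: complex and n t
  proof -
    have "c / fact n * of_real t ^ n = of_real (t ^ n / fact n) * c"
      by (simp add: field_simps)
    then show ?thesis
      by (simp only: times_complex.sel Re_complex_of_real Im_complex_of_real) simp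
  qed
  have "(\<lambda>n. Re ((deriv ^^ n) G 0) * t ^ n / fact n) sums bern_gf t" if "\<bar>t\<bar> < 2 * pi" for t
    using sums_Re[OF series[OF that]] by (simp only: G_of_real Re_term Re_complex_of_real)
  then show ?thesis
    by (intro exI[of _ "\<lambda>n. Re ((deriv ^^ n) G 0)"]) simp
qed

lemma bernoulli_sums:
  assumes "\<bar>t\<bar> < 2 * pi"
  shows "(\<lambda>n. bernoulli n * t ^ n / fact n) sums bern_gf t"
proof -
  have "B = B'"
    if "\<forall>t. \<bar>t\<bar> < 2 * pi \<longrightarrow> (\<lambda>n. B n * t ^ n / fact n) sums bern_gf t"
       "\<forall>t. \<bar>t\<bar> < 2 * pi \<longrightarrow> (\<lambda>n. B' n * t ^ n / fact n) sums bern_gf t" for B B'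
  proof -
    have "(\<lambda>n. B n / fact n) = (\<lambda>n. B' n / fact n)"
      by (rule powser_coeffs_unique[where r = "2 * pi" and f = bern_gf]) (use that in auto)
    then show ?thesis
      by (auto simp: fun_eq_iff)
  qed
  with bern_gf_powser_exists
  have "\<exists>!B. \<forall>t. \<bar>t\<bar> < 2 * pi \<longrightarrow> (\<lambda>n. B n * t ^ n / fact n) sums bern_gf t"
    by (rule ex_ex1I)
  then have "\<forall>t. \<bar>t\<bar> < 2 * pi \<longrightarrow> (\<lambda>n. bernoulli n * t ^ n / fact n) sums bern_gf t"
    unfolding bernoulli_def by (rule theI')
  with assms show ?thesis
    by blast
qed

lemma tanh_half_real: "tanh (x / 2) = (exp x - 1) / (exp x + 1 :: real)"
proof -
  have "exp x * exp (-x) = 1"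
    by (simp flip: exp_add)
  have "tanh (x / 2) = (exp x * (1 - exp (-x))) / (exp x * (1 + exp (-x)))"
    by (simp add: tanh_real_altdef)
  also have "\<dots> = (exp x - 1) / (exp x + 1)"
    using \<open>exp x * exp (-x) = 1\<close> by (simp add: algebra_simps)
  finally show ?thesis .
qed

lemma bern_gf_diff_double: "bern_gf x - bern_gf (2 * x) = x / 2 - x / 2 * tanh (x / 2)"
proof (cases "x = 0")
  case True
  then show ?thesis
    by (simp add: bern_gf_def)
next
  case False
  define e where "e = exp x"
  have "e > 0" "e \<noteq> 1"
    using False by (auto simp: e_def)
  have "exp (2 * x) = (e - 1) * (e + 1) + 1"
    by (simp add: e_def algebra_simps flip: exp_add)
  then have "bern_gf x - bern_gf (2 * x) = x / (e - 1) - 2 * x / ((e - 1) * (e + 1))"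
    using False by (simp add: bern_gf_def e_def)
  also have "\<dots> = x / (e + 1)"
    using \<open>e > 0\<close> \<open>e \<noteq> 1\<close> by (simp add: divide_simps) (simp add: algebra_simps)
  also have "\<dots> = x / 2 - x / 2 * ((e - 1) / (e + 1))"
    using \<open>e > 0\<close> by (simp add: field_simps)
  finally show ?thesis
    by (simp add: tanh_half_real e_def)
qed

section \<open>Partial fractions of tanh\<close>

lemma cosh_of_real: "cosh (of_real t :: 'a :: {real_normed_field,banach}) = of_real (cosh t)"
  by (simp add: cosh_def scaleR_conv_of_real flip: exp_of_real)

lemma sinh_of_real: "sinh (of_real t :: 'a :: {real_normed_field,banach}) = of_real (sinh t)"
  by (simp add: sinh_def scaleR_conv_of_real flip: exp_of_real)

lemma Digamma_reflection_complex:
  fixes z :: complex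
  assumes "z \<notin> \<int>\<^sub>\<le>\<^sub>0" "1 - z \<notin> \<int>\<^sub>\<le>\<^sub>0"
  shows "sin (pi * z) / pi * (Digamma (1 - z) - Digamma z) = cos (pi * z)"
proof -
  have "((\<lambda>z. rGamma z * rGamma (1 - z)) has_field_derivative
          rGamma z * rGamma (1 - z) * (Digamma (1 - z) - Digamma z)) (at z)"
    using assms by (auto intro!: derivative_eq_intros simp: algebra_simps)
  moreover have "((\<lambda>z. rGamma z * rGamma (1 - z)) has_field_derivative cos (pi * z)) (at z)"
    unfolding rGamma_reflection_complex by (auto intro!: derivative_eq_intros)
  ultimately show ?thesis
    using DERIV_unique by (fastforce simp: rGamma_reflection_complex)
qed

lemma Digamma_diff_sums:
  fixes z w :: "'a :: {real_normed_field,banach}"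
  assumes "z \<noteq> 0" "w \<noteq> 0"
  shows "(\<lambda>k. inverse (w + of_nat k) - inverse (z + of_nat k)) sums (Digamma z - Digamma w)"
  using sums_diff[OF summable_sums[OF summable_Digamma[OF assms(1)]]
                     summable_sums[OF summable_Digamma[OF assms(2)]]]
  by (simp add: Digamma_def)

lemma Digamma_half_imag_diff:
  fixes t :: real
  defines "w \<equiv> \<i> * of_real (t / pi)"
  shows "Digamma (1/2 + w) - Digamma (1/2 - w) = \<i> * pi * tanh t"
proof -
  have not_nonpos_int: "1/2 + w \<notin> \<int>\<^sub>\<le>\<^sub>0" "1/2 - w \<notin> \<int>\<^sub>\<le>\<^sub>0"
    by (auto simp: w_def complex_eq_iff elim!: nonpos_Ints_cases')
  have "pi * (1/2 + w) = pi/2 + \<i> * t"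
    by (simp add: w_def algebra_simps)
  then have "sin (pi * (1/2 + w)) = cosh t" "cos (pi * (1/2 + w)) = -\<i> * sinh t"
    by (simp_all add: sin_add cos_add cosh_conv_cos sinh_conv_sin flip: cosh_of_real sinh_of_real)
  moreover have "cosh (complex_of_real t) \<noteq> 0"
    by (simp add: cosh_of_real)
  ultimately show ?thesis
    using Digamma_reflection_complex[of "1/2 + w"] not_nonpos_int
    by (simp add: tanh_def field_simps flip: cosh_of_real sinh_of_real)
qed

lemma tanh_partial_fractions:
  fixes t :: real
  shows "(\<lambda>k. 8 * t / (pi^2 * (2 * real k + 1)^2 + 4 * t^2)) sums tanh t"
proof -
  define w where "w = \<i> * of_real (t / pi)"
  have "1/2 + w \<noteq> 0" "1/2 - w \<noteq> 0"
    by (auto simp: w_def complex_eq_iff)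
  then have "(\<lambda>k. inverse (1/2 - w + of_nat k) - inverse (1/2 + w + of_nat k))
      sums (Digamma (1/2 + w) - Digamma (1/2 - w))"
    by (rule Digamma_diff_sums)
  also have "Digamma (1/2 + w) - Digamma (1/2 - w) = \<i> * pi * tanh t"
    unfolding w_def by (rule Digamma_half_imag_diff)
  finally have "(\<lambda>k. inverse (1/2 - w + of_nat k) - inverse (1/2 + w + of_nat k))
      sums (\<i> * pi * tanh t)" .
  moreover have "inverse (1/2 - w + of_nat k) - inverse (1/2 + w + of_nat k)
      = \<i> * pi * (8 * t / (pi^2 * (2 * real k + 1)^2 + 4 * t^2))" for k
  proof -
    define a s where "a = real k + 1/2" and "s = t / pi"
    have minus_eq: "1/2 - w + of_nat k = of_real a - \<i> * of_real s"
      and plus_eq: "1/2 + w + of_nat k = of_real a + \<i> * of_real s"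
      by (simp_all add: a_def s_def w_def)
    have "a > 0" by (simp add: a_def)
    then have "a^2 + s^2 > 0" by (simp add: add_pos_nonneg)
    have "inverse (of_real a - \<i> * of_real s) - inverse (of_real a + \<i> * of_real s)
        = 2 * \<i> * of_real s / ((of_real a - \<i> * of_real s) * (of_real a + \<i> * of_real s))"
      using \<open>a > 0\<close> by (simp add: complex_eq_iff field_simps)
    also have "(of_real a - \<i> * of_real s) * (of_real a + \<i> * of_real s) = of_real (a^2 + s^2)"
      by (simp add: algebra_simps power2_eq_square)
    also have "2 * \<i> * of_real s / of_real (a^2 + s^2)
        = \<i> * pi * (8 * t / (pi^2 * (2 * real k + 1)^2 + 4 * t^2))"
    proof -
      have "2 * s / (a^2 + s^2) = pi * (8 * t / (pi^2 * (2 * real k + 1)^2 + 4 * t^2))"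
        using \<open>a^2 + s^2 > 0\<close> by (simp add: a_def s_def field_simps power2_eq_square)
      moreover have "2 * \<i> * of_real s / of_real (a^2 + s^2) = \<i> * of_real (2 * s / (a^2 + s^2))"
        by simp
      ultimately show ?thesis
        by simp
    qed
    finally show ?thesis
      unfolding minus_eq plus_eq .
  qed
  ultimately have "(\<lambda>k. (\<i> * pi) * complex_of_real (8 * t / (pi^2 * (2 * real k + 1)^2 + 4 * t^2)))
      sums ((\<i> * pi) * complex_of_real (tanh t))"
    by (simp add: mult.assoc)
  then show ?thesis
    by (subst (asm) sums_mult_iff) (simp_all only: sums_of_real_iff, simp)
qed

section \<open>The odd sums\<close>

text \<open>\<open>odd_sum N t\<close> is the series in the remainder \<open>\<tau>\<^sub>N(t)\<close>; at \<open>t = 0\<close> it equals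
  \<open>(1 - 2\<^bsup>-(2N+2)\<^esup>) \<zeta>(2N+2) / \<pi>\<^sup>2\<close>.\<close>

definition odd_sum_term :: "nat \<Rightarrow> real \<Rightarrow> nat \<Rightarrow> real" where
  "odd_sum_term N t k =
     1 / ((2 * real (Suc k) - 1)^(2*N) * (pi^2 * (2 * real (Suc k) - 1)^2 + 4 * t^2))"

definition odd_sum :: "nat \<Rightarrow> real \<Rightarrow> real" where
  "odd_sum N t = (\<Sum>k. odd_sum_term N t k)"

lemma odd_sum_term_denominator_ge:
  "(real k + 1)^2 \<le> (2 * real (Suc k) - 1)^(2*N) * (pi^2 * (2 * real (Suc k) - 1)^2 + 4 * t^2)"
proof -
  define u where "u = 2 * real (Suc k) - 1"
  have "u \<ge> real k + 1"
    by (simp add: u_def)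
  have "1 \<le> pi^2"
    using pi_gt3 by (intro one_le_power) simp
  have "1 \<le> u^(2*N)"
    using \<open>u \<ge> real k + 1\<close> by (intro one_le_power) simp
  have "(real k + 1)^2 \<le> u^2"
    using \<open>u \<ge> real k + 1\<close> by (intro power_mono) auto
  also have "\<dots> \<le> pi^2 * u^2"
    using mult_right_mono[OF \<open>1 \<le> pi^2\<close>, of "u^2"] by simp
  also have "\<dots> \<le> pi^2 * u^2 + 4 * t^2"
    by simp
  also have "\<dots> \<le> u^(2*N) * (pi^2 * u^2 + 4 * t^2)"
    using mult_right_mono[OF \<open>1 \<le> u^(2*N)\<close>, of "pi^2 * u^2 + 4 * t^2"] by simp
  finally show ?thesis
    unfolding u_def .
qed

lemma odd_sum_term_denominator_pos:
  "0 < (2 * real (Suc k) - 1)^(2*N) * (pi^2 * (2 * real (Suc k) - 1)^2 + 4 * t^2)"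
  using odd_sum_term_denominator_ge[of k N t] zero_less_power2[of "real k + 1"] by linarith

lemma odd_sum_term_pos: "0 < odd_sum_term N t k"
  using odd_sum_term_denominator_pos unfolding odd_sum_term_def by simp

lemma summable_odd_sum_term: "summable (odd_sum_term N t)"
proof (rule summable_comparison_test)
  show "summable (\<lambda>k. 1 / (real k + 1)^2)"
    using sums_summable[OF inverse_squares_sums] by (simp add: add.commute)
  have "odd_sum_term N t k \<le> 1 / (real k + 1)^2" for k
    unfolding odd_sum_term_def
    by (intro divide_left_mono odd_sum_term_denominator_ge mult_pos_pos odd_sum_term_denominator_pos)
       simp_all
  then show "\<exists>M. \<forall>k\<ge>M. norm (odd_sum_term N t k) \<le> 1 / (real k + 1)^2"
    using odd_sum_term_pos by (simp add: less_imp_le)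
qed

lemma odd_sum_pos: "0 < odd_sum N t"
  unfolding odd_sum_def by (intro suminf_pos summable_odd_sum_term odd_sum_term_pos)

lemma odd_sum_term_le_at_0: "odd_sum_term N t k \<le> odd_sum_term N 0 k"
  and odd_sum_term_less_at_0: "t \<noteq> 0 \<Longrightarrow> odd_sum_term N t k < odd_sum_term N 0 k"
proof -
  define u where "u = 2 * real (Suc k) - 1"
  have pos: "0 < u^(2*N) * (pi^2 * u^2 + 4 * s^2)" for s
    unfolding u_def by (rule odd_sum_term_denominator_pos)
  have "0 < u^(2*N)"
    using pos[of 0] by (simp add: zero_less_mult_iff)
  show "odd_sum_term N t k \<le> odd_sum_term N 0 k"
    unfolding odd_sum_term_def u_def[symmetric]
    using \<open>0 < u^(2*N)\<close> by (intro divide_left_mono mult_left_mono mult_pos_pos pos) auto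
  assume "t \<noteq> 0"
  then show "odd_sum_term N t k < odd_sum_term N 0 k"
    unfolding odd_sum_term_def u_def[symmetric]
    using \<open>0 < u^(2*N)\<close> by (intro divide_strict_left_mono mult_strict_left_mono mult_pos_pos pos) auto
qed

lemma odd_sum_le_at_0: "odd_sum N t \<le> odd_sum N 0"
  unfolding odd_sum_def
  by (intro suminf_le summable_odd_sum_term odd_sum_term_le_at_0)

lemma odd_sum_less_at_0:
  assumes "t \<noteq> 0"
  shows "odd_sum N t < odd_sum N 0"
proof -
  have "0 < (\<Sum>k. odd_sum_term N 0 k - odd_sum_term N t k)"
    using odd_sum_term_less_at_0[OF assms]
    by (intro suminf_pos summable_diff summable_odd_sum_term) simp
  also have "\<dots> = odd_sum N 0 - odd_sum N t"
    unfolding odd_sum_def by (intro suminf_diff[symmetric] summable_odd_sum_term)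
  finally show ?thesis
    by simp
qed

section \<open>Taylor expansion of tanh with remainder\<close>

lemma inverse_add_geometric_remainder:
  fixes a x :: "'a :: field"
  assumes "a \<noteq> 0" "a + x \<noteq> 0"
  shows "1 / (a + x) = (\<Sum>j<N. (-x)^j / a^(j+1)) + (-x)^N / (a^N * (a + x))"
proof (induction N)
  case 0
  then show ?case by simp
next
  case (Suc N)
  have "(-x)^N / (a^N * (a + x)) = (-x)^N / a^(N+1) + (-x)^(N+1) / (a^(N+1) * (a + x))"
    using assms by (simp add: divide_simps) (simp add: algebra_simps)
  with Suc show ?case
    by simp
qed

lemma tanh_partial_fraction_term_expansion:
  "8 * t / (pi^2 * (2 * real k + 1)^2 + 4 * t^2)
     = (\<Sum>j<N. (-1)^j * 2^(2*j+3) * t^(2*j+1) / pi^(2*j) * odd_sum_term j 0 k)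
       + (-1)^N * 2^(2*N+3) * t^(2*N+1) / pi^(2*N) * odd_sum_term N t k"
proof -
  define u where "u = 2 * real k + 1"
  define a where "a = pi^2 * u^2"
  have "u > 0" "a > 0"
    by (simp_all add: u_def a_def)
  have term_eq: "odd_sum_term j s k = 1 / (u^(2*j) * (a + 4 * s^2))" for j s
    by (simp add: odd_sum_term_def u_def a_def add.commute)
  have a_power: "a^j = pi^(2*j) * u^(2*j)" for j
    by (simp add: a_def power_mult_distrib power_mult)
  have neg_power: "(-(4 * t^2))^j = (-1)^j * 2^(2*j) * t^(2*j)" for j
    unfolding power_minus[of "4 * t^2"] by (simp add: power_mult_distrib power_mult)
  have "8 * t / (pi^2 * (2 * real k + 1)^2 + 4 * t^2) = 8 * t * (1 / (a + 4 * t^2))"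
    by (simp add: u_def a_def)
  also have "\<dots> = (\<Sum>j<N. 8 * t * ((-(4 * t^2))^j / a^(j+1)))
                  + 8 * t * ((-(4 * t^2))^N / (a^N * (a + 4 * t^2)))"
  proof -
    have "a \<noteq> 0" "a + 4 * t^2 \<noteq> 0"
      using \<open>a > 0\<close> zero_le_power2[of t] by linarith+
    then have "1 / (a + 4 * t^2) = (\<Sum>j<N. (-(4 * t^2))^j / a^(j+1))
        + (-(4 * t^2))^N / (a^N * (a + 4 * t^2))"
      by (rule inverse_add_geometric_remainder)
    then show ?thesis
      by (simp only: sum_distrib_left distrib_left)
  qed
  also have "(\<Sum>j<N. 8 * t * ((-(4 * t^2))^j / a^(j+1)))
      = (\<Sum>j<N. (-1)^j * 2^(2*j+3) * t^(2*j+1) / pi^(2*j) * odd_sum_term j 0 k)"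
    using \<open>u > 0\<close> by (intro sum.cong refl) (simp add: term_eq a_power neg_power power_add field_simps)
  also have "8 * t * ((-(4 * t^2))^N / (a^N * (a + 4 * t^2)))
      = (-1)^N * 2^(2*N+3) * t^(2*N+1) / pi^(2*N) * odd_sum_term N t k"
    using \<open>u > 0\<close> by (simp add: term_eq a_power neg_power power_add field_simps)
  finally show ?thesis .
qed

lemma tanh_expansion:
  "tanh t = (\<Sum>j<N. (-1)^j * 2^(2*j+3) * t^(2*j+1) / pi^(2*j) * odd_sum j 0)
            + (-1)^N * 2^(2*N+3) * t^(2*N+1) / pi^(2*N) * odd_sum N t"
proof -
  have "(\<lambda>k. 8 * t / (pi^2 * (2 * real k + 1)^2 + 4 * t^2)) sums
          ((\<Sum>j<N. (-1)^j * 2^(2*j+3) * t^(2*j+1) / pi^(2*j) * odd_sum j 0)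
           + (-1)^N * 2^(2*N+3) * t^(2*N+1) / pi^(2*N) * odd_sum N t)"
    unfolding tanh_partial_fraction_term_expansion[of t _ N] odd_sum_def
    by (intro sums_add sums_sum sums_mult summable_sums summable_odd_sum_term)
  with tanh_partial_fractions show ?thesis
    by (rule sums_unique2)
qed

lemma tanh_taylor_coeff_eq_odd_sum:
  "2^(2*j+2) * (2^(2*j+2) - 1) * bernoulli (2*j+2) / fact (2*j+2)
     = (-1)^j * 2^(2*j+3) / pi^(2*j) * odd_sum j 0"
proof -
  define M where "M = Suc j"
  define c where "c i = - 2 * (-1)^i / pi^(2*i) * odd_sum i 0" for i
  define q where "q n = (if n = 1 then 1/2 else 0) + (\<Sum>i<M. if n = 2*i+2 then c i else 0)" for n
  define R where "R x = - 2 * (-1)^M / pi^(2*M) * odd_sum M (x/2)" for x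
  have d_sums: "(\<lambda>n. bernoulli n * (1 - 2^n) / fact n * x^n) sums (bern_gf x - bern_gf (2*x))"
    if "\<bar>x\<bar> < pi" for x
  proof -
    have "\<bar>x\<bar> < 2 * pi" "\<bar>2 * x\<bar> < 2 * pi"
      using that pi_gt_zero by linarith+
    from sums_diff[OF bernoulli_sums[OF this(1)] bernoulli_sums[OF this(2)]] show ?thesis
      by (simp add: power_mult_distrib algebra_simps diff_divide_distrib)
  qed
  have q_sums: "(\<lambda>n. q n * x^n) sums (x/2 + (\<Sum>i<M. c i * x^(2*i+2)))" for x :: real
  proof -
    have "(\<lambda>n. q n * x^n)
        = (\<lambda>n. (if n = 1 then x^n / 2 else 0) + (\<Sum>i<M. if n = 2*i+2 then c i * x^n else 0))"
      by (auto simp: fun_eq_iff q_def distrib_right sum_distrib_right intro!: sum.cong)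
    moreover have "\<dots> sums (x^1 / 2 + (\<Sum>i<M. c i * x^(2*i+2)))"
      by (intro sums_add sums_sum sums_single)
    ultimately show ?thesis
      by simp
  qed
  have half_tanh_term:
    "x/2 * ((-1)^i * 2^(2*i+3) * (x/2)^(2*i+1) / pi^(2*i) * s) = 2 * (-1)^i / pi^(2*i) * s * x^(2*i+2)"
    for x s :: real and i
    by (simp add: power_divide power_add field_simps)
  have expansion: "bern_gf x - bern_gf (2*x) = (x/2 + (\<Sum>i<M. c i * x^(2*i+2))) + x^(2*M+2) * R x"
    for x
  proof -
    have "x/2 * tanh (x/2) = (\<Sum>i<M. x/2 * ((-1)^i * 2^(2*i+3) * (x/2)^(2*i+1) / pi^(2*i) * odd_sum i 0))
        + x/2 * ((-1)^M * 2^(2*M+3) * (x/2)^(2*M+1) / pi^(2*M) * odd_sum M (x/2))"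
      unfolding tanh_expansion[of "x/2" M] by (simp add: distrib_left sum_distrib_left mult.assoc)
    also have "\<dots> = - (\<Sum>i<M. c i * x^(2*i+2)) - x^(2*M+2) * R x"
      unfolding half_tanh_term by (simp add: c_def R_def sum_negf field_simps)
    finally show ?thesis
      unfolding bern_gf_diff_double by linarith
  qed
  have bound: "norm (R x) \<le> 2 / pi^(2*M) * odd_sum M 0" for x
  proof -
    have "norm (R x) = 2 / pi^(2*M) * odd_sum M (x/2)"
      using odd_sum_pos[of M "x/2"] by (simp add: R_def abs_mult)
    also have "\<dots> \<le> 2 / pi^(2*M) * odd_sum M 0"
      by (intro mult_left_mono odd_sum_le_at_0) simp
    finally show ?thesis .
  qed
  have "2^(2*j+2) * (2^(2*j+2) - 1) * bernoulli (2*j+2) / fact (2*j+2)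
      = - (2^(2*j+2) * (bernoulli (2*j+2) * (1 - 2^(2*j+2)) / fact (2*j+2)))"
    by (simp add: divide_inverse algebra_simps del: fact_Suc)
  also have "bernoulli (2*j+2) * (1 - 2^(2*j+2)) / fact (2*j+2) = q (2*j+2)"
    by (rule powser_coeff_eq_if_bounded_remainder[where r = pi and K = "2*M+2"])
       (use d_sums q_sums expansion bound in \<open>auto simp: M_def\<close>)
  also have "q (2*j+2) = c j"
    by (simp add: q_def M_def)
  finally show ?thesis
    by (simp add: c_def power_add)
qed

lemma tanh_bernoulli_expansion:
  "tanh t = (\<Sum>j=1..N. 2^(2*j) * (2^(2*j) - 1) * bernoulli (2*j) / fact (2*j) * t^(2*j-1))
            + (-1)^N * 2^(2*N+3) * t^(2*N+1) / pi^(2*N) * odd_sum N t"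
proof -
  have "(\<Sum>j=1..N. 2^(2*j) * (2^(2*j) - 1) * bernoulli (2*j) / fact (2*j) * t^(2*j-1))
      = (\<Sum>j<N. 2^(2*j+2) * (2^(2*j+2) - 1) * bernoulli (2*j+2) / fact (2*j+2) * t^(2*j+1))"
    by (simp add: sum.atLeast1_atMost_eq)
  also have "\<dots> = (\<Sum>j<N. (-1)^j * 2^(2*j+3) * t^(2*j+1) / pi^(2*j) * odd_sum j 0)"
    unfolding tanh_taylor_coeff_eq_odd_sum by (simp add: mult_ac)
  finally show ?thesis
    by (simp add: tanh_expansion[of t N])
qed

theorem theorem2:
  fixes N :: nat
  shows "(\<forall>t::real.
           tanh t = (\<Sum>j=1..N. 2^(2*j) * (2^(2*j) - 1) * bernoulli (2*j) / fact (2*j) * t^(2*j-1))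
             + (-1)^N * 2^(2*N+3) * t^(2*N+1) / pi^(2*N) *
               (\<Sum>k. 1 / ((2 * real (Suc k) - 1)^(2*N) * (pi^2 * (2 * real (Suc k) - 1)^2 + 4 * t^2))))
       \<and> (\<forall>t::real. t \<noteq> 0 \<longrightarrow> (\<exists>\<xi>. 0 < \<xi> \<and> \<xi> < 1 \<and>
           tanh t = (\<Sum>j=1..N. 2^(2*j) * (2^(2*j) - 1) * bernoulli (2*j) / fact (2*j) * t^(2*j-1))
             + \<xi> * (2^(2*N+2) * (2^(2*N+2) - 1) * bernoulli (2*N+2) / fact (2*N+2)) * t^(2*N+1)))"
proof (intro conjI allI impI)
  fix t :: real
  show "tanh t = (\<Sum>j=1..N. 2^(2*j) * (2^(2*j) - 1) * bernoulli (2*j) / fact (2*j) * t^(2*j-1))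
      + (-1)^N * 2^(2*N+3) * t^(2*N+1) / pi^(2*N) *
        (\<Sum>k. 1 / ((2 * real (Suc k) - 1)^(2*N) * (pi^2 * (2 * real (Suc k) - 1)^2 + 4 * t^2)))"
    using tanh_bernoulli_expansion[of t N] by (simp add: odd_sum_def odd_sum_term_def)
next
  fix t :: real
  assume "t \<noteq> 0"
  have "0 < odd_sum N t" "odd_sum N t < odd_sum N 0"
    using odd_sum_pos odd_sum_less_at_0[OF \<open>t \<noteq> 0\<close>] by auto
  moreover have "(-1)^N * 2^(2*N+3) * t^(2*N+1) / pi^(2*N) * odd_sum N t
      = odd_sum N t / odd_sum N 0 * (2^(2*N+2) * (2^(2*N+2) - 1) * bernoulli (2*N+2) / fact (2*N+2))
        * t^(2*N+1)"
    unfolding tanh_taylor_coeff_eq_odd_sum using odd_sum_pos[of N 0] by (simp add: field_simps)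
  ultimately show "\<exists>\<xi>. 0 < \<xi> \<and> \<xi> < 1 \<and>
      tanh t = (\<Sum>j=1..N. 2^(2*j) * (2^(2*j) - 1) * bernoulli (2*j) / fact (2*j) * t^(2*j-1))
        + \<xi> * (2^(2*N+2) * (2^(2*N+2) - 1) * bernoulli (2*N+2) / fact (2*N+2)) * t^(2*N+1)"
    using tanh_bernoulli_expansion[of t N]
    by (intro exI[of _ "odd_sum N t / odd_sum N 0"]) auto
qed

end
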